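(* Let $\mathcal{T}\in\mathbb{T}$ and let $\widehat{\mathcal{T}}\in\mathbb{T}$ be a refinement of $\mathcal{T}$. Then $$\sum_{T\in\widehat{\mathcal{T}}\setminus\mathcal{T}}\eta_{\widehat{\mathcal{T}}}(T)^2\le q\sum_{T\in\mathcal{T}\setminus\widehat{\mathcal{T}}}\eta_\mathcal{T}(T)^2+C\|u_{\widehat{\mathcal{T}}}-u_\mathcal{T}\|_{L^2(0,t_{\rm end};\mathcal{V})}^2$$ and $$\Big|\Big(\sum_{T\in\widehat{\mathcal{T}}\cap\mathcal{T}}\eta_{\widehat{\mathcal{T}}}(T)^2\Big)^{1/2}-\Big(\sum_{T\in\mathcal{T}\cap\widehat{\mathcal{T}}}\eta_\mathcal{T}(T)^2\Big)^{1/2}\Big|\le C\|u_{\widehat{\mathcal{T}}}-u_\mathcal{T}\|_{L^2(0,t_{\rm end};\mathcal{V})},$$ with constants $1/4<q<1$ and $C>0$ depending only on $\mathbb{A}$.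
   Context: $\mathcal{V}$ finite-dimensional Hilbert space, $\mathcal{V}\subseteq\mathcal{H}\subseteq\mathcal{V}^\star$ a Gelfand triple, $\mathbb{A}:\mathcal{V}\to\mathcal{V}^\star$ bounded, linear, time-independent, coercive. $t_{\rm end}>0$, $u_0\in\mathcal{H}$; $\mathcal{T}_0$ a partition of $[0,t_{\rm end}]$ into compact intervals, $\mathbb{T}$ the partitions obtained by iterated bisection of intervals (each bisected interval is split into two halves of equal length). $f\in L^2(0,t_{\rm end};\mathcal{V}^\star)$ affine in $t$ on each interval of $\mathcal{T}_0$. For $\mathcal{T}\in\mathbb{T}$, $u_\mathcal{T}$ is the continuous, $\mathcal{T}$-piecewise affine-in-time Crank–Nicolson solution: $u_\mathcal{T}(0)=u_0$ and on each $T_i=[t_i,t_{i+1}]\in\mathcal{T}$, $\frac{u_\mathcal{T}(t_{i+1})-u_\mathcal{T}(t_i)}{|T_i|}+\mathbb{A}u_\mathcal{T}(\frac{t_i+t_{i+1}}2)=f|_{T_i}(\frac{t_i+t_{i+1}}2)$. Estimator: $\eta_\mathcal{T}(T):=|T|\,\|\partial_tf-\partial_t\mathbb{A}u_\mathcal{T}\|_{L^2(T;\mathcal{V}^\star)}$. *)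

theory Defs
  imports "HOL-Analysis.Analysis"
begin

text \<open>Time intervals are represented as pairs (a,b) standing for the compact
interval {a..b}.\<close>

definition is_partition :: "(real \<times> real) set \<Rightarrow> real \<Rightarrow> real \<Rightarrow> bool" where
  "is_partition P lo hi \<longleftrightarrow>
     finite P \<and> (\<forall>T\<in>P. fst T < snd T) \<and>
     (\<Union>T\<in>P. {fst T..snd T}) = {lo..hi} \<and>
     (\<forall>T\<in>P. \<forall>T'\<in>P. T \<noteq> T' \<longrightarrow> {fst T<..<snd T} \<inter> {fst T'<..<snd T'} = {})"

inductive_set bisections :: "(real \<times> real) set \<Rightarrow> (real \<times> real) set set"
  for P0 :: "(real \<times> real) set" where
  base: "P0 \<in> bisections P0"
| bisect: "P \<in> bisections P0 \<Longrightarrow> (a, b) \<in> P \<Longrightarrow>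
     (P - {(a, b)}) \<union> {(a, (a + b) / 2), ((a + b) / 2, b)} \<in> bisections P0"

definition refines :: "(real \<times> real) set \<Rightarrow> (real \<times> real) set \<Rightarrow> bool" where
  "refines Q P \<longleftrightarrow> (\<forall>T'\<in>Q. \<exists>T\<in>P. fst T \<le> fst T' \<and> snd T' \<le> snd T)"

definition piecewise_affine_on :: "(real \<Rightarrow> 'w::real_vector) \<Rightarrow> (real \<times> real) set \<Rightarrow> bool" where
  "piecewise_affine_on f P \<longleftrightarrow>
     (\<forall>T\<in>P. \<exists>c d. \<forall>t\<in>{fst T<..<snd T}. f t = c + t *\<^sub>R d)"

text \<open>The H inner product (Gelfand triple V \<subseteq> H \<subseteq> V*, V finite-dimensional, so H = V
as sets with another inner product m); h \<in> H acts on V via v \<mapsto> m h v.\<close>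
definition H_inner :: "('v::euclidean_space \<Rightarrow> 'v \<Rightarrow> real) \<Rightarrow> bool" where
  "H_inner m \<longleftrightarrow> bilinear m \<and> (\<forall>x y. m x y = m y x) \<and> (\<forall>x. x \<noteq> 0 \<longrightarrow> m x x > 0)"

definition cn_solution ::
  "('v::euclidean_space \<Rightarrow> 'v \<Rightarrow> real) \<Rightarrow> ('v \<Rightarrow>\<^sub>L ('v \<Rightarrow>\<^sub>L real)) \<Rightarrow> (real \<Rightarrow> ('v \<Rightarrow>\<^sub>L real))
    \<Rightarrow> 'v \<Rightarrow> (real \<times> real) set \<Rightarrow> (real \<Rightarrow> 'v) \<Rightarrow> bool" where
  "cn_solution m A f u0 P u \<longleftrightarrow>
     u 0 = u0 \<and>
     (\<forall>T\<in>P. \<forall>t\<in>{fst T..snd T}.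
        u t = u (fst T) + ((t - fst T) / (snd T - fst T)) *\<^sub>R (u (snd T) - u (fst T))) \<and>
     (\<forall>T\<in>P. \<forall>v. m ((1 / (snd T - fst T)) *\<^sub>R (u (snd T) - u (fst T))) v
                 + blinfun_apply (blinfun_apply A (u ((fst T + snd T) / 2))) v
               = blinfun_apply (f ((fst T + snd T) / 2)) v)"

definition est ::
  "('v::euclidean_space \<Rightarrow>\<^sub>L ('v \<Rightarrow>\<^sub>L real)) \<Rightarrow> (real \<Rightarrow> ('v \<Rightarrow>\<^sub>L real)) \<Rightarrow> (real \<Rightarrow> 'v)
     \<Rightarrow> real \<times> real \<Rightarrow> real" where
  "est A f u T = (snd T - fst T) *
     sqrt (integral {fst T..snd T}
       (\<lambda>t. (norm (vector_derivative (\<lambda>s. f s - blinfun_apply A (u s)) (at t)))\<^sup>2))"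

definition L2V_norm :: "real \<Rightarrow> (real \<Rightarrow> 'v::euclidean_space) \<Rightarrow> real" where
  "L2V_norm tend w = sqrt (integral {0..tend} (\<lambda>t. (norm (w t))\<^sup>2))"

end

theory Submission
  imports Defs
begin

(* On every interval the Crank-Nicolson solution and f are affine in time, so
   eta(T) = |T|^(3/2) * ||d - A w||  with d, w the (constant) time derivatives of f and u.
   Comparing u_Q on T with u_P on the interval T' of P containing it, the two residuals
   differ by at most ||A|| * ||w_Q - w_P||, and for the affine function e = u_Q - u_P on T
   the slope is controlled by the mean square:  |T|^3 ||e'||^2 <= 12 ||e||^2_{L^2(T)}.
   If T is new, bisection gives |T| <= |T'|/2; with (x + y)^2 <= 2x^2 + 2y^2 this yields
   eta_Q(T)^2 <= |T| / (2|T'|) * eta_P(T')^2 + 24 ||A||^2 ||e||^2_{L^2(T)}, and since the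
   new intervals inside T' have total length at most |T'|, summing gives q = 1/2.
   On common intervals the same comparison, without squaring the sum, gives stability
   through the triangle inequality in l^2. *)

lemma is_partition_bisect:
  assumes P: "is_partition P lo hi" and ab: "(a, b) \<in> P"
  shows "is_partition ((P - {(a, b)}) \<union> {(a, (a + b) / 2), ((a + b) / 2, b)}) lo hi"
proof -
  define m where "m = (a + b) / 2"
  define P' where "P' = (P - {(a, b)}) \<union> {(a, m), (m, b)}"
  have "a < b" using P ab unfolding is_partition_def by fastforce
  then have am: "a < m" and mb: "m < b" by (auto simp: m_def)
  have apart: "{fst T<..<snd T} \<inter> {a<..<b} = {}" if "T \<in> P - {(a, b)}" for T
    using P ab that unfolding is_partition_def by (metis DiffE fst_conv singletonI snd_conv)
  have "(\<Union>T\<in>P'. {fst T..snd T}) = (\<Union>T\<in>P - {(a, b)}. {fst T..snd T}) \<union> ({a..m} \<union> {m..b})"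
    unfolding P'_def by (simp add: Un_ac)
  also have "{a..m} \<union> {m..b} = {a..b}" using am mb by (simp add: ivl_disj_un_two_touch(4))
  also have "(\<Union>T\<in>P - {(a, b)}. {fst T..snd T}) \<union> {a..b}
      = (\<Union>T\<in>insert (a, b) (P - {(a, b)}). {fst T..snd T})"
    by (simp only: UN_insert fst_conv snd_conv Un_commute)
  also have "insert (a, b) (P - {(a, b)}) = P" using ab by blast
  finally have union: "(\<Union>T\<in>P'. {fst T..snd T}) = {lo..hi}"
    using P unfolding is_partition_def by simp
  have halves: "T \<in> {(a, m), (m, b)} \<Longrightarrow> {fst T<..<snd T} \<subseteq> {a<..<b}" for T
    using am mb by auto
  have disjoint: "{fst T<..<snd T} \<inter> {fst T'<..<snd T'} = {}"
    if T: "T \<in> P'" and T': "T' \<in> P'" and "T \<noteq> T'" for T T'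
  proof (cases "T \<in> P - {(a, b)}"; cases "T' \<in> P - {(a, b)}")
    assume "T \<in> P - {(a, b)}" "T' \<in> P - {(a, b)}"
    then show ?thesis using P \<open>T \<noteq> T'\<close> unfolding is_partition_def by blast
  next
    assume "T \<in> P - {(a, b)}" "T' \<notin> P - {(a, b)}"
    then show ?thesis using apart[of T] halves[of T'] T' unfolding P'_def by blast
  next
    assume "T \<notin> P - {(a, b)}" "T' \<in> P - {(a, b)}"
    then show ?thesis using apart[of T'] halves[of T] T unfolding P'_def by blast
  next
    assume "T \<notin> P - {(a, b)}" "T' \<notin> P - {(a, b)}"
    then show ?thesis using T T' \<open>T \<noteq> T'\<close> unfolding P'_def by auto
  qed
  have "fst T < snd T" if "T \<in> P'" for T
    using that am mb P unfolding is_partition_def P'_def by auto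
  with union disjoint P show ?thesis
    unfolding is_partition_def P'_def m_def by simp
qed

lemma is_partition_bisections:
  assumes "P \<in> bisections T0" "is_partition T0 lo hi"
  shows "is_partition P lo hi"
  using assms(1) by induction (use assms(2) is_partition_bisect in auto)

lemma partition_finite: "is_partition P lo hi \<Longrightarrow> finite P"
  by (simp add: is_partition_def)

lemma partition_nondegenerate: "is_partition P lo hi \<Longrightarrow> T \<in> P \<Longrightarrow> fst T < snd T"
  unfolding is_partition_def by blast

lemma partition_superinterval_unique:
  assumes "is_partition P lo hi" "T1 \<in> P" "T2 \<in> P" "a < b"
    "fst T1 \<le> a" "b \<le> snd T1" "fst T2 \<le> a" "b \<le> snd T2"
  shows "T1 = T2"
proof -
  have "(a + b) / 2 \<in> {fst T1<..<snd T1} \<inter> {fst T2<..<snd T2}" using assms(4-) by auto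
  then show ?thesis using assms(1-3) unfolding is_partition_def by blast
qed

lemma bisections_dyadic_subinterval:
  assumes "P \<in> bisections T0" "T \<in> P" and nondeg: "\<forall>S\<in>T0. fst S < snd S"
  shows "\<exists>S\<in>T0. \<exists>k::nat. fst S \<le> fst T \<and> snd T \<le> snd S \<and> snd T - fst T = (snd S - fst S) / 2 ^ k"
  using assms(1,2)
proof (induction arbitrary: T rule: bisections.induct)
  case base
  then show ?case by (intro bexI[of _ T] exI[of _ 0]) auto
next
  case (bisect P a b)
  show ?case
  proof (cases "T \<in> P")
    case True then show ?thesis using bisect.IH by blast
  next
    case False
    then have T: "T = (a, (a + b) / 2) \<or> T = ((a + b) / 2, b)" using bisect.prems by blast
    obtain S k where S: "S \<in> T0" "fst S \<le> a" "b \<le> snd S" "b - a = (snd S - fst S) / 2 ^ k"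
      using bisect.IH[OF bisect.hyps(2)] by auto
    have "a \<le> b" using S(1,4) nondeg by (smt (verit) divide_nonneg_pos zero_less_power)
    then have "fst S \<le> fst T \<and> snd T \<le> snd S \<and> snd T - fst T = (snd S - fst S) / 2 ^ Suc k"
      using T S(2-4) by (auto simp: field_simps)
    then show ?thesis using S(1) by blast
  qed
qed

lemma refines_bisections:
  "P \<in> bisections T0 \<Longrightarrow> \<forall>S\<in>T0. fst S < snd S \<Longrightarrow> refines P T0"
  unfolding refines_def using bisections_dyadic_subinterval by meson

lemma piecewise_affine_on_refines:
  "piecewise_affine_on f P \<Longrightarrow> refines Q P \<Longrightarrow> piecewise_affine_on f Q"
  unfolding piecewise_affine_on_def refines_def
  by (meson greaterThanLessThan_iff order_le_less_trans order_less_le_trans)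

lemma bisections_proper_subinterval_halves:
  assumes T0: "is_partition T0 lo hi" and P: "P \<in> bisections T0" and Q: "Q \<in> bisections T0"
    and T: "T \<in> Q" and T': "T' \<in> P" and sub: "fst T' \<le> fst T" "snd T \<le> snd T'" and "T \<noteq> T'"
  shows "snd T - fst T \<le> (snd T' - fst T') / 2"
proof -
  have nondeg: "\<forall>S\<in>T0. fst S < snd S" using partition_nondegenerate[OF T0] by blast
  have lt: "fst T < snd T" using partition_nondegenerate[OF is_partition_bisections[OF Q T0] T] .
  obtain S k where S: "S \<in> T0" "fst S \<le> fst T" "snd T \<le> snd S"
      and k: "snd T - fst T = (snd S - fst S) / 2 ^ k"
    using bisections_dyadic_subinterval[OF Q T nondeg] by blast
  obtain S' k' where S': "S' \<in> T0" "fst S' \<le> fst T'" "snd T' \<le> snd S'"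
      and k': "snd T' - fst T' = (snd S' - fst S') / 2 ^ k'"
    using bisections_dyadic_subinterval[OF P T' nondeg] by blast
  have "S' = S"
    using partition_superinterval_unique[OF T0 S'(1) S(1) lt] S S' sub by linarith
  have len: "0 < snd S - fst S" using nondeg S(1) by simp
  have "snd T - fst T < snd T' - fst T'"
    using sub \<open>T \<noteq> T'\<close> by (cases T, cases T') auto
  then have "(snd S - fst S) / 2 ^ k < (snd S - fst S) / 2 ^ k'" using k k' \<open>S' = S\<close> by simp
  then have "k' < k"
  proof (rule contrapos_pp)
    assume "\<not> k' < k"
    then show "\<not> (snd S - fst S) / 2 ^ k < (snd S - fst S) / 2 ^ k'"
      using len by (simp add: divide_left_mono not_less power_increasing)
  qed
  then have "(snd S - fst S) / 2 ^ k \<le> (snd S - fst S) / 2 ^ Suc k'"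
    using len by (intro divide_left_mono power_increasing) auto
  then show ?thesis
    using k k' \<open>S' = S\<close> by simp
qed

lemma affine_interpolation_exists:
  fixes u :: "real \<Rightarrow> 'v::real_vector"
  assumes "\<forall>t\<in>{a..b}. u t = u a + ((t - a) / (b - a)) *\<^sub>R (u b - u a)"
  shows "\<exists>p w. \<forall>t\<in>{a..b}. u t = p + t *\<^sub>R w"
proof (intro exI ballI)
  fix t assume t: "t \<in> {a..b}"
  define v where "v = u b - u a"
  have k: "(t - a) / (b - a) = t / (b - a) - a / (b - a)" by (simp add: diff_divide_distrib)
  have "u t = u a + ((t - a) / (b - a)) *\<^sub>R v" using assms t unfolding v_def by blast
  also have "\<dots> = u a + (t / (b - a) - a / (b - a)) *\<^sub>R v" by (simp only: k)
  also have "\<dots> = (u a - (a / (b - a)) *\<^sub>R v) + (t / (b - a)) *\<^sub>R v"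
    by (simp only: scaleR_diff_left) (simp add: algebra_simps)
  also have "(t / (b - a)) *\<^sub>R v = t *\<^sub>R ((1 / (b - a)) *\<^sub>R v)" by simp
  finally show "u t = (u a - (a / (b - a)) *\<^sub>R v) + t *\<^sub>R ((1 / (b - a)) *\<^sub>R v)" .
qed

lemma cn_solution_affine:
  assumes "cn_solution m A f u0 P u" "T \<in> P"
  shows "\<exists>p w. \<forall>t\<in>{fst T..snd T}. u t = p + t *\<^sub>R w"
proof -
  have "\<forall>t\<in>{fst T..snd T}. u t = u (fst T) + ((t - fst T) / (snd T - fst T)) *\<^sub>R (u (snd T) - u (fst T))"
    using assms unfolding cn_solution_def by blast
  then show ?thesis by (rule affine_interpolation_exists)
qed

lemma has_integral_centered_quadratic:
  fixes X Y Z :: real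
  assumes "a \<le> b"
  shows "((\<lambda>t. X + 2 * (t - (a + b) / 2) * Y + (t - (a + b) / 2)\<^sup>2 * Z)
           has_integral ((b - a) * X + (b - a) ^ 3 / 12 * Z)) {a..b}"
proof -
  define m where "m = (a + b) / 2"
  define F where "F t = X * t + (t - m)\<^sup>2 * Y + (t - m) ^ 3 / 3 * Z" for t
  have "(F has_real_derivative X + 2 * (t - m) * Y + (t - m)\<^sup>2 * Z) (at t within {a..b})" for t
    unfolding F_def by (rule derivative_eq_intros refl | simp add: power2_eq_square)+
  then have "((\<lambda>t. X + 2 * (t - m) * Y + (t - m)\<^sup>2 * Z) has_integral (F b - F a)) {a..b}"
    using assms by (intro fundamental_theorem_of_calculus)
      (auto simp: has_real_derivative_iff_has_vector_derivative)
  moreover have "F b - F a = (b - a) * X + (b - a) ^ 3 / 12 * Z"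
    unfolding F_def m_def by (simp add: power2_eq_square power3_eq_cube field_simps)
  ultimately show ?thesis by (simp add: m_def)
qed

lemma has_integral_norm_sq_affine:
  fixes p s :: "'v::real_inner"
  assumes "a \<le> b"
  shows "((\<lambda>t. (norm (p + t *\<^sub>R s))\<^sup>2) has_integral
           ((b - a) * (norm (p + ((a + b) / 2) *\<^sub>R s))\<^sup>2 + (b - a) ^ 3 / 12 * (norm s)\<^sup>2)) {a..b}"
proof -
  define m where "m = (a + b) / 2"
  define c where "c = p + m *\<^sub>R s"
  have expand: "(norm (p + t *\<^sub>R s))\<^sup>2 = (norm c)\<^sup>2 + 2 * (t - m) * inner c s + (t - m)\<^sup>2 * (norm s)\<^sup>2"
    for t
  proof -
    have "p + t *\<^sub>R s = c + (t - m) *\<^sub>R s" by (simp add: c_def scaleR_diff_left)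
    then have "(norm (p + t *\<^sub>R s))\<^sup>2 = inner (c + (t - m) *\<^sub>R s) (c + (t - m) *\<^sub>R s)"
      by (simp only: power2_norm_eq_inner)
    also have "\<dots> = inner c c + 2 * (t - m) * inner c s + (t - m)\<^sup>2 * inner s s"
      by (simp add: inner_add_left inner_add_right inner_commute algebra_simps power2_eq_square)
    finally show ?thesis by (simp add: power2_norm_eq_inner)
  qed
  show ?thesis
    using has_integral_centered_quadratic[OF assms, of "(norm c)\<^sup>2" "inner c s" "(norm s)\<^sup>2"]
    unfolding m_def[symmetric] c_def[symmetric] expand .
qed

lemma slope_sq_le_integral_norm_sq:
  fixes e :: "real \<Rightarrow> 'v::real_inner"
  assumes "a < b" and e: "\<forall>t\<in>{a..b}. e t = p + t *\<^sub>R s"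
  shows "(b - a) ^ 3 * (norm s)\<^sup>2 \<le> 12 * integral {a..b} (\<lambda>t. (norm (e t))\<^sup>2)"
    and "(\<lambda>t. (norm (e t))\<^sup>2) integrable_on {a..b}"
proof -
  have I: "((\<lambda>t. (norm (e t))\<^sup>2) has_integral
           ((b - a) * (norm (p + ((a + b) / 2) *\<^sub>R s))\<^sup>2 + (b - a) ^ 3 / 12 * (norm s)\<^sup>2)) {a..b}"
    using e by (intro has_integral_cong[THEN iffD2, OF _ has_integral_norm_sq_affine]) (use \<open>a < b\<close> in auto)
  have "0 \<le> (b - a) * (norm (p + ((a + b) / 2) *\<^sub>R s))\<^sup>2" using \<open>a < b\<close> by simp
  then show "(b - a) ^ 3 * (norm s)\<^sup>2 \<le> 12 * integral {a..b} (\<lambda>t. (norm (e t))\<^sup>2)"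
    using integral_unique[OF I] by simp
  show "(\<lambda>t. (norm (e t))\<^sup>2) integrable_on {a..b}" using I by blast
qed

lemma est_affine:
  fixes A :: "'v::euclidean_space \<Rightarrow>\<^sub>L ('v \<Rightarrow>\<^sub>L real)"
  assumes "a < b" and u: "\<forall>t\<in>{a..b}. u t = p + t *\<^sub>R w"
    and f: "\<forall>t\<in>{a<..<b}. f t = c + t *\<^sub>R d"
  shows "est A f u (a, b) = (b - a) * sqrt (b - a) * norm (d - A w)"
proof -
  let ?g = "\<lambda>s. f s - A (u s)"
  have "vector_derivative ?g (at t) = d - A w" if "t \<in> {a<..<b}" for t
  proof (rule vector_derivative_at)
    have "((\<lambda>s. (c + s *\<^sub>R d) - A (p + s *\<^sub>R w)) has_vector_derivative (d - A w)) (at t)"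
      by (auto intro!: derivative_eq_intros simp: blinfun.add_right blinfun.scaleR_right)
    then show "(?g has_vector_derivative (d - A w)) (at t)"
      by (rule has_vector_derivative_transform_within_open[of _ _ _ "{a<..<b}"])
        (use that u f in auto)
  qed
  then have "integral {a..b} (\<lambda>t. (norm (vector_derivative ?g (at t)))\<^sup>2)
      = integral {a..b} (\<lambda>t. (norm (d - A w))\<^sup>2)"
    by (intro integral_spike[of "{a, b}"]) auto
  also have "\<dots> = (b - a) * (norm (d - A w))\<^sup>2" using \<open>a < b\<close> by simp
  finally show ?thesis
    using \<open>a < b\<close> unfolding est_def by (simp add: real_sqrt_mult)
qed

lemma norm_residual_diff_le:
  fixes A :: "'a::real_normed_vector \<Rightarrow>\<^sub>L 'b::real_normed_vector"
  shows "\<bar>norm (d - A w) - norm (d - A w')\<bar> \<le> norm A * norm (w - w')"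
proof -
  have "\<bar>norm (d - A w) - norm (d - A w')\<bar> \<le> norm ((d - A w) - (d - A w'))"
    by (rule norm_triangle_ineq3)
  also have "(d - A w) - (d - A w') = - A (w - w')" by (simp add: blinfun.diff_right)
  finally show ?thesis using norm_blinfun[of A "w - w'"] by simp
qed

lemma est_sq_subinterval_le:
  fixes A :: "'v::euclidean_space \<Rightarrow>\<^sub>L ('v \<Rightarrow>\<^sub>L real)"
  assumes "a' \<le> a" "b \<le> b'" "a < b" and half: "b - a \<le> (b' - a') / 2"
    and uQ: "\<forall>t\<in>{a..b}. uQ t = p + t *\<^sub>R w"
    and uP: "\<forall>t\<in>{a'..b'}. uP t = p' + t *\<^sub>R w'"
    and f: "\<forall>t\<in>{a'<..<b'}. f t = c + t *\<^sub>R d"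
  shows "(est A f uQ (a, b))\<^sup>2 \<le> (b - a) / (2 * (b' - a')) * (est A f uP (a', b'))\<^sup>2
           + 24 * (norm A)\<^sup>2 * integral {a..b} (\<lambda>t. (norm (uQ t - uP t))\<^sup>2)"
proof -
  define L L' where "L = b - a" and "L' = b' - a'"
  define gQ gP where "gQ = norm (d - A w)" and "gP = norm (d - A w')"
  define K s where "K = norm A" and "s = norm (w - w')"
  define I where "I = integral {a..b} (\<lambda>t. (norm (uQ t - uP t))\<^sup>2)"
  have L: "0 < L" "L \<le> L' / 2" using \<open>a < b\<close> half by (simp_all add: L_def L'_def)
  have "est A f uQ (a, b) = L * sqrt L * gQ"
    unfolding L_def gQ_def using assms by (intro est_affine[OF \<open>a < b\<close> uQ]) auto
  then have estQ: "(est A f uQ (a, b))\<^sup>2 = L ^ 3 * gQ\<^sup>2"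
    using L by (simp add: power_mult_distrib power3_eq_cube power2_eq_square)
  have "est A f uP (a', b') = L' * sqrt L' * gP"
    unfolding L'_def gP_def using assms by (intro est_affine[OF _ uP f]) auto
  then have estP: "(est A f uP (a', b'))\<^sup>2 = L' ^ 3 * gP\<^sup>2"
    using L by (simp add: power_mult_distrib power3_eq_cube power2_eq_square)
  have "L ^ 3 * s\<^sup>2 \<le> 12 * I"
    unfolding L_def s_def I_def using assms
    by (intro slope_sq_le_integral_norm_sq(1)[of _ _ _ "p - p'"]) (auto simp: algebra_simps)
  have "gQ \<le> gP + K * s"
    using norm_residual_diff_le[of d A w w'] unfolding gQ_def gP_def K_def s_def by linarith
  then have "gQ\<^sup>2 \<le> (gP + K * s)\<^sup>2" by (simp add: gQ_def power_mono)
  also have "\<dots> \<le> 2 * gP\<^sup>2 + 2 * K\<^sup>2 * s\<^sup>2"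
    using zero_le_power2[of "gP - K * s"] by (simp add: power2_eq_square algebra_simps)
  finally have "L ^ 3 * gQ\<^sup>2 \<le> L ^ 3 * (2 * gP\<^sup>2 + 2 * K\<^sup>2 * s\<^sup>2)"
    using L by (intro mult_left_mono) auto
  also have "\<dots> = 2 * L * L\<^sup>2 * gP\<^sup>2 + 2 * K\<^sup>2 * (L ^ 3 * s\<^sup>2)"
    by (simp add: power3_eq_cube power2_eq_square algebra_simps)
  also have "\<dots> \<le> 2 * L * (L' / 2)\<^sup>2 * gP\<^sup>2 + 2 * K\<^sup>2 * (12 * I)"
    using L \<open>L ^ 3 * s\<^sup>2 \<le> 12 * I\<close>
    by (intro add_mono mult_right_mono mult_left_mono power_mono) auto
  also have "\<dots> = L / (2 * L') * (L' ^ 3 * gP\<^sup>2) + 24 * K\<^sup>2 * I"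
    using L by (simp add: power2_eq_square power3_eq_cube field_simps)
  finally show ?thesis
    using estQ estP unfolding L_def L'_def K_def I_def by simp
qed

lemma est_diff_sq_le_integral:
  fixes A :: "'v::euclidean_space \<Rightarrow>\<^sub>L ('v \<Rightarrow>\<^sub>L real)"
  assumes "a < b"
    and uQ: "\<forall>t\<in>{a..b}. uQ t = p + t *\<^sub>R w"
    and uP: "\<forall>t\<in>{a..b}. uP t = p' + t *\<^sub>R w'"
    and f: "\<forall>t\<in>{a<..<b}. f t = c + t *\<^sub>R d"
  shows "(est A f uQ (a, b) - est A f uP (a, b))\<^sup>2
           \<le> 12 * (norm A)\<^sup>2 * integral {a..b} (\<lambda>t. (norm (uQ t - uP t))\<^sup>2)"
proof -
  define L where "L = b - a"
  have "0 < L" using \<open>a < b\<close> by (simp add: L_def)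
  have "est A f uQ (a, b) - est A f uP (a, b) = L * sqrt L * (norm (d - A w) - norm (d - A w'))"
    unfolding L_def est_affine[OF \<open>a < b\<close> uQ f] est_affine[OF \<open>a < b\<close> uP f]
    by (simp add: algebra_simps)
  then have "(est A f uQ (a, b) - est A f uP (a, b))\<^sup>2 = L ^ 3 * (norm (d - A w) - norm (d - A w'))\<^sup>2"
    using \<open>0 < L\<close> by (simp add: power_mult_distrib power3_eq_cube power2_eq_square)
  also have "\<dots> \<le> L ^ 3 * (norm A * norm (w - w'))\<^sup>2"
    using \<open>0 < L\<close> power_mono[OF norm_residual_diff_le[of d A w w'] abs_ge_zero, of 2]
    by (intro mult_left_mono) (auto simp: power2_abs)
  also have "\<dots> = (norm A)\<^sup>2 * (L ^ 3 * (norm (w - w'))\<^sup>2)" by (simp add: power_mult_distrib)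
  also have "\<dots> \<le> (norm A)\<^sup>2 * (12 * integral {a..b} (\<lambda>t. (norm (uQ t - uP t))\<^sup>2))"
    unfolding L_def using assms
    by (intro mult_left_mono slope_sq_le_integral_norm_sq(1)[of _ _ _ "p - p'"]) (auto simp: algebra_simps)
  finally show ?thesis by simp
qed

lemma L2_set_diff_abs_le:
  "\<bar>L2_set f A - L2_set g A\<bar> \<le> L2_set (\<lambda>x. f x - g x) A"
proof -
  have "L2_set f A \<le> L2_set (\<lambda>x. f x - g x) A + L2_set g A"
    using L2_set_triangle_ineq[of "\<lambda>x. f x - g x" g A] by simp
  moreover have "L2_set g A \<le> L2_set (\<lambda>x. g x - f x) A + L2_set f A"
    using L2_set_triangle_ineq[of "\<lambda>x. g x - f x" f A] by simp
  moreover have "L2_set (\<lambda>x. g x - f x) A = L2_set (\<lambda>x. f x - g x) A"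
    unfolding L2_set_def by (simp add: power2_commute)
  ultimately show ?thesis by linarith
qed

lemma has_integral_partition_Union:
  fixes g :: "real \<Rightarrow> real"
  assumes Q: "is_partition Q lo hi" and "S \<subseteq> Q"
    and int: "\<forall>T\<in>S. g integrable_on {fst T..snd T}"
  shows "(g has_integral (\<Sum>T\<in>S. integral {fst T..snd T} g)) (\<Union>T\<in>S. {fst T..snd T})"
proof -
  let ?i = "\<lambda>T. {fst T..snd T}"
  have "finite S" using finite_subset[OF \<open>S \<subseteq> Q\<close> partition_finite[OF Q]] .
  have nondeg: "fst T < snd T" if "T \<in> S" for T
    using partition_nondegenerate[OF Q] \<open>S \<subseteq> Q\<close> that by blast
  have "inj_on ?i S"
  proof (rule inj_onI)
    fix T1 T2 assume "T1 \<in> S" "T2 \<in> S" "?i T1 = ?i T2"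
    then show "T1 = T2" using nondeg[of T1] nondeg[of T2] by (simp add: prod_eq_iff)
  qed
  have "negligible (?i T1 \<inter> ?i T2)" if "T1 \<in> S" "T2 \<in> S" "T1 \<noteq> T2" for T1 T2
  proof -
    define l r where "l = max (fst T1) (fst T2)" and "r = min (snd T1) (snd T2)"
    have "\<not> l < r"
    proof
      assume "l < r"
      then have "T1 = T2"
        using partition_superinterval_unique[OF Q _ _ \<open>l < r\<close>, of T1 T2] \<open>S \<subseteq> Q\<close> that
        unfolding l_def r_def by auto
      with \<open>T1 \<noteq> T2\<close> show False ..
    qed
    moreover have "?i T1 \<inter> ?i T2 = {l..r}" by (simp add: l_def r_def Int_atLeastAtMost)
    ultimately have "?i T1 \<inter> ?i T2 \<subseteq> {l}" by auto
    then show ?thesis by (rule negligible_subset[rotated]) auto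
  qed
  then have "pairwise (\<lambda>X Y. negligible (X \<inter> Y)) (?i ` S)"
    unfolding pairwise_def by blast
  then have "(g has_integral (\<Sum>X\<in>?i ` S. integral X g)) (\<Union>(?i ` S))"
    using \<open>finite S\<close> int by (intro has_integral_Union) auto
  moreover have "(\<Sum>X\<in>?i ` S. integral X g) = (\<Sum>T\<in>S. integral (?i T) g)"
    using sum.reindex[OF \<open>inj_on ?i S\<close>] by simp
  ultimately show ?thesis by simp
qed

lemma sum_lengths_le:
  assumes Q: "is_partition Q lo hi" and "S \<subseteq> Q" and "\<forall>T\<in>S. a \<le> fst T \<and> snd T \<le> b" "a \<le> b"
  shows "(\<Sum>T\<in>S. snd T - fst T) \<le> b - a"
proof -
  have "fst T \<le> snd T" if "T \<in> S" for T
    using partition_nondegenerate[OF Q] \<open>S \<subseteq> Q\<close> that by fastforce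
  then have lengths: "(\<Sum>T\<in>S. integral {fst T..snd T} (\<lambda>x. 1::real)) = (\<Sum>T\<in>S. snd T - fst T)"
    by (intro sum.cong) auto
  have I: "((\<lambda>x. 1::real) has_integral (\<Sum>T\<in>S. integral {fst T..snd T} (\<lambda>x. 1::real)))
      (\<Union>T\<in>S. {fst T..snd T})"
    using assms by (intro has_integral_partition_Union) auto
  have J: "((\<lambda>x. 1::real) has_integral (b - a)) {a..b}"
    using has_integral_const_real[of "1::real" a b] \<open>a \<le> b\<close> by simp
  have "(\<Union>T\<in>S. {fst T..snd T}) \<subseteq> {a..b}" using assms by auto
  from has_integral_subset_le[OF this I J] show ?thesis using lengths by simp
qed

locale nested_bisections =
  fixes T0 P Q :: "(real \<times> real) set" and lo hi :: real
  assumes T0: "is_partition T0 lo hi"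
    and P_bisections: "P \<in> bisections T0" and Q_bisections: "Q \<in> bisections T0"
    and Q_refines_P: "refines Q P"
begin

lemma partition_P: "is_partition P lo hi"
  using is_partition_bisections[OF P_bisections T0] .

lemma partition_Q: "is_partition Q lo hi"
  using is_partition_bisections[OF Q_bisections T0] .

definition parent :: "real \<times> real \<Rightarrow> real \<times> real" where
  "parent T = (SOME T'. T' \<in> P \<and> fst T' \<le> fst T \<and> snd T \<le> snd T')"

lemma parent:
  assumes "T \<in> Q"
  shows "parent T \<in> P" "fst (parent T) \<le> fst T" "snd T \<le> snd (parent T)"
proof -
  have "\<exists>T'. T' \<in> P \<and> fst T' \<le> fst T \<and> snd T \<le> snd T'"
    using Q_refines_P assms unfolding refines_def by blast
  then have "parent T \<in> P \<and> fst (parent T) \<le> fst T \<and> snd T \<le> snd (parent T)"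
    unfolding parent_def by (rule someI_ex)
  then show "parent T \<in> P" "fst (parent T) \<le> fst T" "snd T \<le> snd (parent T)" by auto
qed

lemma parent_notin_Q:
  assumes "T \<in> Q" "T \<notin> P"
  shows "parent T \<notin> Q"
proof
  assume "parent T \<in> Q"
  have "T = parent T"
    using partition_superinterval_unique[OF partition_Q assms(1) \<open>parent T \<in> Q\<close>
        partition_nondegenerate[OF partition_Q assms(1)] order_refl order_refl parent(2,3)[OF assms(1)]] .
  then show False using parent(1)[OF assms(1)] assms(2) by simp
qed

lemma length_le_half_parent:
  assumes "T \<in> Q - P"
  shows "snd T - fst T \<le> (snd (parent T) - fst (parent T)) / 2"
proof -
  have "T \<noteq> parent T" using assms parent(1)[of T] by auto
  with assms show ?thesis
    using bisections_proper_subinterval_halves[OF T0 P_bisections Q_bisections _ parent(1) parent(2,3)]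
    by blast
qed

lemma sum_over_parents_le:
  assumes "\<forall>T'\<in>P - Q. 0 \<le> h T'"
  shows "(\<Sum>T\<in>Q - P. (snd T - fst T) * h (parent T)) \<le> (\<Sum>T'\<in>P - Q. (snd T' - fst T') * h T')"
proof -
  have fin: "finite P" "finite Q"
    using partition_finite[OF partition_P] partition_finite[OF partition_Q] .
  have "parent ` (Q - P) \<subseteq> P - Q" using parent parent_notin_Q by auto
  then have "(\<Sum>T\<in>Q - P. (snd T - fst T) * h (parent T))
      = (\<Sum>T'\<in>P - Q. \<Sum>T\<in>{T \<in> Q - P. parent T = T'}. (snd T - fst T) * h (parent T))"
    using fin by (intro sum.group[symmetric]) auto
  also have "\<dots> = (\<Sum>T'\<in>P - Q. h T' * (\<Sum>T\<in>{T \<in> Q - P. parent T = T'}. snd T - fst T))"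
    by (intro sum.cong) (auto simp: sum_distrib_left mult.commute)
  also have "\<dots> \<le> (\<Sum>T'\<in>P - Q. h T' * (snd T' - fst T'))"
  proof (intro sum_mono mult_left_mono)
    fix T' assume "T' \<in> P - Q"
    then show "(\<Sum>T\<in>{T \<in> Q - P. parent T = T'}. snd T - fst T) \<le> snd T' - fst T'"
      using parent partition_nondegenerate[OF partition_P, of T']
      by (intro sum_lengths_le[OF partition_Q]) fastforce+
    show "0 \<le> h T'" using assms \<open>T' \<in> P - Q\<close> by blast
  qed
  finally show ?thesis by (simp add: mult.commute)
qed

end

locale cn_refinement = nested_bisections T0 P Q 0 tend
  for T0 P Q :: "(real \<times> real) set" and tend :: real +
  fixes m :: "'v::euclidean_space \<Rightarrow> 'v \<Rightarrow> real" and A :: "'v \<Rightarrow>\<^sub>L ('v \<Rightarrow>\<^sub>L real)"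
    and f :: "real \<Rightarrow> ('v \<Rightarrow>\<^sub>L real)" and u0 :: 'v and uP uQ :: "real \<Rightarrow> 'v"
  assumes f_affine: "piecewise_affine_on f T0"
    and cn_P: "cn_solution m A f u0 P uP" and cn_Q: "cn_solution m A f u0 Q uQ"
begin

definition diff_energy :: "real \<times> real \<Rightarrow> real" where
  "diff_energy T = integral {fst T..snd T} (\<lambda>t. (norm (uQ t - uP t))\<^sup>2)"

lemma f_affine_P: "piecewise_affine_on f P"
proof -
  have "\<forall>S\<in>T0. fst S < snd S" using partition_nondegenerate[OF T0] by blast
  then show ?thesis
    by (intro piecewise_affine_on_refines[OF f_affine] refines_bisections[OF P_bisections])
qed

lemma f_affine_on:
  assumes "T \<in> P"
  obtains c d where "\<forall>t\<in>{fst T<..<snd T}. f t = c + t *\<^sub>R d"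
  using f_affine_P assms unfolding piecewise_affine_on_def by blast

lemma diff_affine:
  assumes "T \<in> Q"
  obtains p w where "\<forall>t\<in>{fst T..snd T}. uQ t - uP t = p + t *\<^sub>R w"
proof -
  obtain p w where uQ: "\<forall>t\<in>{fst T..snd T}. uQ t = p + t *\<^sub>R w"
    using cn_solution_affine[OF cn_Q assms] by blast
  obtain p' w' where uP: "\<forall>t\<in>{fst (parent T)..snd (parent T)}. uP t = p' + t *\<^sub>R w'"
    using cn_solution_affine[OF cn_P parent(1)[OF assms]] by blast
  have "\<forall>t\<in>{fst T..snd T}. uQ t - uP t = (p - p') + t *\<^sub>R (w - w')"
    using uQ uP parent[OF assms] by (auto simp: algebra_simps)
  then show ?thesis by (rule that)
qed

lemma diff_norm_sq_integrable:
  assumes "T \<in> Q"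
  shows "(\<lambda>t. (norm (uQ t - uP t))\<^sup>2) integrable_on {fst T..snd T}"
proof -
  obtain p w where "\<forall>t\<in>{fst T..snd T}. uQ t - uP t = p + t *\<^sub>R w"
    using diff_affine[OF assms] by blast
  then show ?thesis
    by (rule slope_sq_le_integral_norm_sq(2)[OF partition_nondegenerate[OF partition_Q assms]])
qed

lemma diff_energy_nonneg:
  assumes "T \<in> Q"
  shows "0 \<le> diff_energy T"
  unfolding diff_energy_def by (rule integral_nonneg[OF diff_norm_sq_integrable[OF assms]]) simp

lemma integral_diff_norm_sq:
  "integral {0..tend} (\<lambda>t. (norm (uQ t - uP t))\<^sup>2) = (\<Sum>T\<in>Q. diff_energy T)"
proof -
  have "((\<lambda>t. (norm (uQ t - uP t))\<^sup>2) has_integral (\<Sum>T\<in>Q. diff_energy T))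
      (\<Union>T\<in>Q. {fst T..snd T})"
    unfolding diff_energy_def
    by (intro has_integral_partition_Union[OF partition_Q]) (auto intro: diff_norm_sq_integrable)
  moreover have "(\<Union>T\<in>Q. {fst T..snd T}) = {0..tend}"
    using partition_Q unfolding is_partition_def by blast
  ultimately show ?thesis by (simp add: integral_unique)
qed

lemma L2V_norm_nonneg: "0 \<le> L2V_norm tend (\<lambda>t. uQ t - uP t)"
  unfolding L2V_norm_def integral_diff_norm_sq
  by (intro real_sqrt_ge_zero sum_nonneg diff_energy_nonneg)

lemma L2V_norm_sq: "(L2V_norm tend (\<lambda>t. uQ t - uP t))\<^sup>2 = (\<Sum>T\<in>Q. diff_energy T)"
  unfolding L2V_norm_def integral_diff_norm_sq
  using diff_energy_nonneg by (simp add: sum_nonneg)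

lemma est_sq_child_le:
  assumes "T \<in> Q - P"
  shows "(est A f uQ T)\<^sup>2
           \<le> (snd T - fst T) / (2 * (snd (parent T) - fst (parent T))) * (est A f uP (parent T))\<^sup>2
             + 24 * (norm A)\<^sup>2 * diff_energy T"
proof -
  have T: "T \<in> Q" using assms by blast
  obtain p w where uQ: "\<forall>t\<in>{fst T..snd T}. uQ t = p + t *\<^sub>R w"
    using cn_solution_affine[OF cn_Q T] by blast
  obtain p' w' where uP: "\<forall>t\<in>{fst (parent T)..snd (parent T)}. uP t = p' + t *\<^sub>R w'"
    using cn_solution_affine[OF cn_P parent(1)[OF T]] by blast
  obtain c d where f: "\<forall>t\<in>{fst (parent T)<..<snd (parent T)}. f t = c + t *\<^sub>R d"
    using f_affine_on[OF parent(1)[OF T]] by blast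
  show ?thesis
    using est_sq_subinterval_le[OF parent(2,3)[OF T] partition_nondegenerate[OF partition_Q T]
        length_le_half_parent[OF assms] uQ uP f]
    unfolding diff_energy_def by simp
qed

lemma est_diff_sq_le_common:
  assumes "T \<in> Q \<inter> P"
  shows "(est A f uQ T - est A f uP T)\<^sup>2 \<le> 12 * (norm A)\<^sup>2 * diff_energy T"
proof -
  obtain p w where uQ: "\<forall>t\<in>{fst T..snd T}. uQ t = p + t *\<^sub>R w"
    using cn_solution_affine[OF cn_Q] assms by blast
  obtain p' w' where uP: "\<forall>t\<in>{fst T..snd T}. uP t = p' + t *\<^sub>R w'"
    using cn_solution_affine[OF cn_P] assms by blast
  obtain c d where f: "\<forall>t\<in>{fst T<..<snd T}. f t = c + t *\<^sub>R d"
    using f_affine_on assms by blast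
  show ?thesis
    using est_diff_sq_le_integral[OF partition_nondegenerate[OF partition_Q] uQ uP f] assms
    unfolding diff_energy_def by simp
qed

theorem estimator_reduction:
  "(\<Sum>T\<in>Q - P. (est A f uQ T)\<^sup>2)
     \<le> 1 / 2 * (\<Sum>T\<in>P - Q. (est A f uP T)\<^sup>2) + 24 * (norm A)\<^sup>2 * (L2V_norm tend (\<lambda>t. uQ t - uP t))\<^sup>2"
proof -
  define h where "h T' = (est A f uP T')\<^sup>2 / (2 * (snd T' - fst T'))" for T' :: "real \<times> real"
  have "(\<Sum>T\<in>Q - P. (est A f uQ T)\<^sup>2)
      \<le> (\<Sum>T\<in>Q - P. (snd T - fst T) * h (parent T) + 24 * (norm A)\<^sup>2 * diff_energy T)"
    using est_sq_child_le by (intro sum_mono) (simp add: h_def)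
  also have "\<dots> = (\<Sum>T\<in>Q - P. (snd T - fst T) * h (parent T))
      + 24 * (norm A)\<^sup>2 * (\<Sum>T\<in>Q - P. diff_energy T)"
    by (simp add: sum.distrib sum_distrib_left)
  also have "\<dots> \<le> (\<Sum>T'\<in>P - Q. (snd T' - fst T') * h T') + 24 * (norm A)\<^sup>2 * (\<Sum>T\<in>Q. diff_energy T)"
  proof (intro add_mono mult_left_mono sum_over_parents_le)
    show "\<forall>T'\<in>P - Q. 0 \<le> h T'"
      using partition_nondegenerate[OF partition_P] by (auto simp: h_def less_imp_le)
    show "(\<Sum>T\<in>Q - P. diff_energy T) \<le> (\<Sum>T\<in>Q. diff_energy T)"
      using partition_finite[OF partition_Q] diff_energy_nonneg by (intro sum_mono2) auto
  qed simp
  also have "(\<Sum>T'\<in>P - Q. (snd T' - fst T') * h T') = (\<Sum>T\<in>P - Q. 1 / 2 * (est A f uP T)\<^sup>2)"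
  proof (rule sum.cong[OF refl])
    fix T' assume "T' \<in> P - Q"
    then have "snd T' - fst T' \<noteq> 0" using partition_nondegenerate[OF partition_P] by fastforce
    then show "(snd T' - fst T') * h T' = 1 / 2 * (est A f uP T')\<^sup>2" by (simp add: h_def field_simps)
  qed
  also have "\<dots> = 1 / 2 * (\<Sum>T\<in>P - Q. (est A f uP T)\<^sup>2)" by (simp add: sum_distrib_left)
  finally show ?thesis by (simp only: L2V_norm_sq)
qed

theorem estimator_stability:
  "\<bar>sqrt (\<Sum>T\<in>Q \<inter> P. (est A f uQ T)\<^sup>2) - sqrt (\<Sum>T\<in>P \<inter> Q. (est A f uP T)\<^sup>2)\<bar>
     \<le> 4 * norm A * L2V_norm tend (\<lambda>t. uQ t - uP t)"
proof -
  have "\<bar>sqrt (\<Sum>T\<in>Q \<inter> P. (est A f uQ T)\<^sup>2) - sqrt (\<Sum>T\<in>P \<inter> Q. (est A f uP T)\<^sup>2)\<bar>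
      = \<bar>L2_set (est A f uQ) (Q \<inter> P) - L2_set (est A f uP) (Q \<inter> P)\<bar>"
    unfolding L2_set_def by (simp add: Int_commute)
  also have "\<dots> \<le> L2_set (\<lambda>T. est A f uQ T - est A f uP T) (Q \<inter> P)"
    by (rule L2_set_diff_abs_le)
  also have "\<dots> \<le> sqrt (\<Sum>T\<in>Q \<inter> P. 12 * (norm A)\<^sup>2 * diff_energy T)"
    unfolding L2_set_def by (intro real_sqrt_le_mono sum_mono est_diff_sq_le_common)
  also have "\<dots> \<le> sqrt (16 * (norm A)\<^sup>2 * (L2V_norm tend (\<lambda>t. uQ t - uP t))\<^sup>2)"
  proof (rule real_sqrt_le_mono)
    have "(\<Sum>T\<in>Q \<inter> P. diff_energy T) \<le> (\<Sum>T\<in>Q. diff_energy T)"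
      using partition_finite[OF partition_Q] diff_energy_nonneg by (intro sum_mono2) auto
    moreover have "0 \<le> (\<Sum>T\<in>Q \<inter> P. diff_energy T)"
      by (intro sum_nonneg diff_energy_nonneg) auto
    ultimately show "(\<Sum>T\<in>Q \<inter> P. 12 * (norm A)\<^sup>2 * diff_energy T)
        \<le> 16 * (norm A)\<^sup>2 * (L2V_norm tend (\<lambda>t. uQ t - uP t))\<^sup>2"
      unfolding L2V_norm_sq sum_distrib_left[symmetric]
      by (intro mult_mono) auto
  qed
  also have "\<dots> = sqrt ((4 * norm A * L2V_norm tend (\<lambda>t. uQ t - uP t))\<^sup>2)"
    by (simp add: power_mult_distrib)
  also have "\<dots> = 4 * norm A * L2V_norm tend (\<lambda>t. uQ t - uP t)"
    using L2V_norm_nonneg by simp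
  finally show ?thesis .
qed

end

theorem mainTheorem17:
  fixes A :: "'v::euclidean_space \<Rightarrow>\<^sub>L ('v \<Rightarrow>\<^sub>L real)"
  assumes coercive: "\<exists>\<alpha>>0. \<forall>v. blinfun_apply (blinfun_apply A v) v \<ge> \<alpha> * (norm v)\<^sup>2"
  shows "\<exists>q C. 1/4 < q \<and> q < 1 \<and> C > 0 \<and>
    (\<forall>(m :: 'v \<Rightarrow> 'v \<Rightarrow> real) (tend :: real) (u0 :: 'v) T0 (f :: real \<Rightarrow> ('v \<Rightarrow>\<^sub>L real))
        P Q (uP :: real \<Rightarrow> 'v) (uQ :: real \<Rightarrow> 'v).
       H_inner m \<longrightarrow> 0 < tend \<longrightarrow> is_partition T0 0 tend \<longrightarrow> piecewise_affine_on f T0 \<longrightarrow>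
       P \<in> bisections T0 \<longrightarrow> Q \<in> bisections T0 \<longrightarrow> refines Q P \<longrightarrow>
       cn_solution m A f u0 P uP \<longrightarrow> cn_solution m A f u0 Q uQ \<longrightarrow>
       (\<Sum>T\<in>Q - P. (est A f uQ T)\<^sup>2)
          \<le> q * (\<Sum>T\<in>P - Q. (est A f uP T)\<^sup>2) + C * (L2V_norm tend (\<lambda>t. uQ t - uP t))\<^sup>2
       \<and> \<bar>sqrt (\<Sum>T\<in>Q \<inter> P. (est A f uQ T)\<^sup>2) - sqrt (\<Sum>T\<in>P \<inter> Q. (est A f uP T)\<^sup>2)\<bar>
          \<le> C * L2V_norm tend (\<lambda>t. uQ t - uP t))"
proof (intro exI conjI allI impI)
  define C where "C = 24 * (norm A)\<^sup>2 + 4 * norm A + 1"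
  show "1 / 4 < (1 / 2 :: real)" "1 / 2 < (1 :: real)" by simp_all
  show "0 < C" unfolding C_def by (simp add: add_nonneg_pos)
  fix m tend u0 T0 f P Q uP uQ
  assume "is_partition T0 0 tend" "piecewise_affine_on f T0" "P \<in> bisections T0" "Q \<in> bisections T0"
    "refines Q P" "cn_solution m A f u0 P uP" "cn_solution m A f u0 Q uQ"
  then interpret cn_refinement T0 P Q tend m A f u0 uP uQ
    by unfold_locales
  note L2V_norm_nonneg
  then show "(\<Sum>T\<in>Q - P. (est A f uQ T)\<^sup>2)
      \<le> 1 / 2 * (\<Sum>T\<in>P - Q. (est A f uP T)\<^sup>2) + C * (L2V_norm tend (\<lambda>t. uQ t - uP t))\<^sup>2"
    and "\<bar>sqrt (\<Sum>T\<in>Q \<inter> P. (est A f uQ T)\<^sup>2) - sqrt (\<Sum>T\<in>P \<inter> Q. (est A f uP T)\<^sup>2)\<bar>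
      \<le> C * L2V_norm tend (\<lambda>t. uQ t - uP t)"
    using estimator_reduction estimator_stability unfolding C_def
    by (smt (verit) mult_right_mono zero_le_power2 norm_ge_zero)+
qed

end
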